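(* Let $P$ be a finite $(3+1)$-free poset and $T$ a $P$-array. Then $T$ is a $P$-tableau if and only if for each pair of adjacent columns $T_i,T_{i+1}$ of $T$, the ladder decomposition $L_m,\dots,L_1$ of $(T_i,T_{i+1})$ satisfies $\sum_{j=1}^k|L_j\cap T_i|\ge\sum_{j=1}^k|L_j\cap T_{i+1}|$ for all $k\in[m]$.
   Context: $a<_Pb$: strict order; $a\sim_Pb$: incomparable or equal. A $P$-array is a filling $T$ of a Young diagram (English notation) by elements of $P$ such that each column satisfies $T(1,c)<_PT(2,c)<_P\cdots$; it is a $P$-tableau if additionally $T(r,c+1)\not<_PT(r,c)$ whenever both boxes exist. Each column is viewed as a chain of $P$. For chains $C,D$, $\mathrm{inc}_P(C,D)$ is the bipartite graph on $C\sqcup D$ with an edge $c$—$d$ ($c\in C,d\in D$) when $c\sim_Pd$; its connected components are the ladders of $(C,D)$. For $(3+1)$-free $P$ the ladders are totally ordered in the sense that for two distinct ladders every element of one is $<_P$ every element of the other; the ladder decomposition $L_m,\dots,L_1$ lists the ladders in decreasing order (so $L_1$ is the smallest). *)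

theory Defs
  imports Main
begin

text \<open>The poset P is a finite type of class order; x < y is the strict order of P.
  x \<sim>_P y means incomparable or equal.\<close>

definition sim_P :: "'a::order \<Rightarrow> 'a \<Rightarrow> bool" where
  "sim_P x y \<longleftrightarrow> \<not> x < y \<and> \<not> y < x"

definition three_one_free :: "'a::order itself \<Rightarrow> bool" where
  "three_one_free _ \<longleftrightarrow>
     \<not> (\<exists>a b c d :: 'a. a < b \<and> b < c \<and> sim_P d a \<and> sim_P d b \<and> sim_P d c)"

text \<open>A filling of a Young diagram (English notation) is given as the list of its columns,
  column c being the list (T(1,c), T(2,c), ...).\<close>

definition young_filling :: "'a list list \<Rightarrow> bool" where
  "young_filling T \<longleftrightarrow> (\<forall>col\<in>set T. col \<noteq> []) \<and> sorted_wrt (\<ge>) (map length T)"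

definition P_array :: "'a::order list list \<Rightarrow> bool" where
  "P_array T \<longleftrightarrow> young_filling T \<and> (\<forall>col\<in>set T. sorted_wrt (<) col)"

definition P_tableau :: "'a::order list list \<Rightarrow> bool" where
  "P_tableau T \<longleftrightarrow> P_array T \<and>
     (\<forall>c r. Suc c < length T \<and> r < length (T ! Suc c) \<longrightarrow> \<not> (T ! Suc c ! r < T ! c ! r))"

text \<open>The incomparability graph inc_P(C,D) on the disjoint union C \<squnion> D
  (elements of C tagged Inl, elements of D tagged Inr).\<close>

definition inc_vertices :: "'a list \<Rightarrow> 'a list \<Rightarrow> ('a + 'a) set" where
  "inc_vertices C D = Inl ` set C \<union> Inr ` set D"

definition inc_edges :: "'a::order list \<Rightarrow> 'a list \<Rightarrow> (('a + 'a) \<times> ('a + 'a)) set" where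
  "inc_edges C D =
     {(Inl c, Inr d) | c d. c \<in> set C \<and> d \<in> set D \<and> sim_P c d} \<union>
     {(Inr d, Inl c) | c d. c \<in> set C \<and> d \<in> set D \<and> sim_P c d}"

definition ladders :: "'a::order list \<Rightarrow> 'a list \<Rightarrow> ('a + 'a) set set" where
  "ladders C D = {(inc_edges C D)\<^sup>* `` {v} | v. v \<in> inc_vertices C D}"

fun elem_val :: "'a + 'a \<Rightarrow> 'a" where
  "elem_val (Inl x) = x"
| "elem_val (Inr x) = x"

definition ladder_less :: "('a::order + 'a) set \<Rightarrow> ('a + 'a) set \<Rightarrow> bool" where
  "ladder_less L L' \<longleftrightarrow> (\<forall>u\<in>L. \<forall>v\<in>L'. elem_val u < elem_val v)"

text \<open>Ladder decomposition, listed in increasing order: index 0 is L_1 (the smallest),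
  the last entry is L_m.\<close>

definition ladder_decomposition :: "'a::order list \<Rightarrow> 'a list \<Rightarrow> ('a + 'a) set list" where
  "ladder_decomposition C D =
     (THE Ls. set Ls = ladders C D \<and> sorted_wrt ladder_less Ls)"

definition part_in_C :: "('a + 'a) set \<Rightarrow> nat" where
  "part_in_C L = card {x. Inl x \<in> L}"

definition part_in_D :: "('a + 'a) set \<Rightarrow> nat" where
  "part_in_D L = card {x. Inr x \<in> L}"

definition ladder_condition :: "'a::order list \<Rightarrow> 'a list \<Rightarrow> bool" where
  "ladder_condition C D \<longleftrightarrow>
     (let Ls = ladder_decomposition C D in
      \<forall>k\<in>{1..length Ls}. (\<Sum>j<k. part_in_C (Ls ! j)) \<ge> (\<Sum>j<k. part_in_D (Ls ! j)))"

end

theory Submission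
  imports Defs
begin

text \<open>For any two chains C, D of a poset the ladders are totally ordered, so the union of
  the k lowest ladders meets C and D in down-sets, i.e. in initial segments of the columns, and
  the ladder condition compares the lengths of these segments. If it fails at some k, with m
  elements of C in the segment, then D!m lies in the k lowest ladders and C!m does not, so
  D!m < C!m. Conversely, suppose D!r < C!r. The ladder of C!r cannot lie below that of D!r;
  if it lies above, the prefix of ladders ending with the ladder of D!r violates the
  condition. If both lie in the same ladder, (3+1)-freeness gives the contradiction: in a
  ladder the i-th lowest element of C is incomparable to the i-th lowest element of D, since
  otherwise an incomparability edge would jump over a 3-chain of one column lying entirely
  incomparable to an element of the other.\<close>

lemma sim_P_sym: "sim_P a b \<longleftrightarrow> sim_P b a"
  unfolding sim_P_def by auto

lemma chain_nth_le:
  "sorted_wrt (<) (X::'a::order list) \<Longrightarrow> i \<le> j \<Longrightarrow> j < length X \<Longrightarrow> X!i \<le> X!j"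
  by (metis order.order_iff_strict sorted_wrt_nth_less)

lemma chain_nth_inj:
  "sorted_wrt (<) (X::'a::order list) \<Longrightarrow> i < length X \<Longrightarrow> j < length X \<Longrightarrow> X!i = X!j \<Longrightarrow> i = j"
  by (metis linorder_neqE_nat order_less_irrefl sorted_wrt_nth_less)

lemma chain_elems_comparable:
  "sorted_wrt (<) (X::'a::order list) \<Longrightarrow> a \<in> set X \<Longrightarrow> b \<in> set X \<Longrightarrow> a \<noteq> b \<Longrightarrow> a < b \<or> b < a"
  by (metis in_set_conv_nth linorder_neqE_nat sorted_wrt_nth_less)

definition chain_downset :: "'a::order set \<Rightarrow> 'a list \<Rightarrow> bool" where
  "chain_downset S X \<longleftrightarrow> S \<subseteq> set X \<and> (\<forall>x\<in>S. \<forall>y\<in>set X. y < x \<longrightarrow> y \<in> S)"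

lemma chain_downset_card_gt_if_nth_mem:
  assumes X: "sorted_wrt (<) X" and S: "chain_downset S X" and r: "r < length X"
    and Xr: "X!r \<in> S"
  shows "r < card S"
proof -
  have "(!) X ` {..r} \<subseteq> S"
  proof
    fix y assume "y \<in> (!) X ` {..r}"
    then obtain i where i: "i \<le> r" "y = X!i" by auto
    then show "y \<in> S"
      using S Xr r sorted_wrt_nth_less[OF X, of i r] unfolding chain_downset_def
      by (cases "i = r") auto
  qed
  moreover have "card ((!) X ` {..r}) = Suc r"
    using chain_nth_inj[OF X] r by (subst card_image) (auto intro: inj_onI)
  moreover have "finite S"
    using S unfolding chain_downset_def by (meson List.finite_set finite_subset)
  ultimately show ?thesis
    by (metis Suc_le_eq card_mono)
qed

lemma chain_downset_nth_mem_if_card_gt: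
  assumes X: "sorted_wrt (<) X" and S: "chain_downset S X" and r: "r < length X"
    and card: "r < card S"
  shows "X!r \<in> S"
proof (rule ccontr)
  assume Xr: "X!r \<notin> S"
  have "S \<subseteq> (!) X ` {..<r}"
  proof
    fix y assume y: "y \<in> S"
    then obtain i where i: "i < length X" "y = X!i"
      using S unfolding chain_downset_def by (metis in_set_conv_nth subsetD)
    have "i < r"
    proof (rule ccontr)
      assume "\<not> i < r"
      then have "X!r = y \<or> X!r < y"
        using chain_nth_le[OF X, of r i] i by auto
      then show False
        using Xr y r S unfolding chain_downset_def by auto
    qed
    then show "y \<in> (!) X ` {..<r}" using i by auto
  qed
  then have "card S \<le> r"
    by (metis card_image_le card_lessThan card_mono finite_imageI finite_lessThan le_trans)
  then show False using card by simp
qed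

lemma chain_downset_nth_mem_iff:
  "sorted_wrt (<) X \<Longrightarrow> chain_downset S X \<Longrightarrow> r < length X \<Longrightarrow> X!r \<in> S \<longleftrightarrow> r < card S"
  using chain_downset_card_gt_if_nth_mem chain_downset_nth_mem_if_card_gt by blast

lemma rtrancl_exit_edge:
  "(a, b) \<in> E\<^sup>* \<Longrightarrow> a \<in> S \<Longrightarrow> b \<notin> S \<Longrightarrow> \<exists>p q. (p, q) \<in> E \<and> p \<in> S \<and> q \<notin> S"
  by (induction rule: rtrancl_induct) auto



lemma finite_set_sorted_wrt_list:
  assumes "finite S"
    and "\<And>x y. x \<in> S \<Longrightarrow> y \<in> S \<Longrightarrow> x \<noteq> y \<Longrightarrow> R x y \<or> R y x"
    and "\<And>x y z. x \<in> S \<Longrightarrow> y \<in> S \<Longrightarrow> z \<in> S \<Longrightarrow> R x y \<Longrightarrow> R y z \<Longrightarrow> R x z"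
  shows "\<exists>xs. set xs = S \<and> sorted_wrt R xs"
  using assms
proof (induction S rule: finite_induct)
  case empty
  show ?case by simp
next
  case (insert x F)
  have "\<exists>xs. set xs = F \<and> sorted_wrt R xs"
    by (rule insert.IH) (use insert.prems in blast)+
  then obtain xs where xs: "set xs = F" "sorted_wrt R xs"
    by blast
  define ys where "ys = filter (\<lambda>y. R y x) xs @ x # filter (\<lambda>y. R x y) xs"
  have "set ys = insert x F"
  proof -
    have "y \<in> set ys" if "y \<in> F" for y
      using insert.prems(1)[of y x] insert.hyps(2) xs(1) that unfolding ys_def by auto
    then show ?thesis using xs(1) unfolding ys_def by auto
  qed
  moreover have "sorted_wrt R ys"
  proof -
    have "R a b" if "a \<in> set xs" "R a x" "b \<in> set xs" "R x b" for a b
      using insert.prems(2)[of a x b] that xs(1) by simp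
    then show ?thesis
      using xs(2) unfolding ys_def sorted_wrt_append by (simp add: sorted_wrt_filter)
  qed
  ultimately show ?case by blast
qed

lemma sorted_wrt_list_unique:
  assumes "sorted_wrt R xs" "sorted_wrt R ys" "set xs = set ys"
    and "\<And>x y. x \<in> set xs \<Longrightarrow> y \<in> set xs \<Longrightarrow> R x y \<Longrightarrow> \<not> R y x"
  shows "xs = ys"
  using assms
proof (induction xs arbitrary: ys)
  case Nil
  then show ?case by simp
next
  case (Cons x xs)
  obtain y ys' where ys: "ys = y # ys'"
    using Cons.prems(3) by (cases ys) auto
  have x_min: "\<forall>z\<in>set xs. R x z" and y_min: "\<forall>z\<in>set ys'. R y z"
    using Cons.prems(1,2) ys by simp_all
  have "x = y"
    using Cons.prems(3,4) x_min y_min ys by (metis list.set_intros(1) set_ConsD)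
  moreover have "x \<notin> set xs" "y \<notin> set ys'"
    using Cons.prems(3,4) x_min y_min ys by (metis list.set_intros(1))+
  ultimately have "set xs = set ys'"
    using Cons.prems(3) ys by auto
  moreover have "sorted_wrt R xs" "sorted_wrt R ys'"
    using Cons.prems(1,2) ys by simp_all
  ultimately have "xs = ys'"
    using Cons.IH[of ys'] Cons.prems(4) by (meson list.set_intros(2))
  then show ?case using ys \<open>x = y\<close> by simp
qed

lemma inc_vertices_simps [simp]:
  "Inl x \<in> inc_vertices C D \<longleftrightarrow> x \<in> set C"
  "Inr x \<in> inc_vertices C D \<longleftrightarrow> x \<in> set D"
  unfolding inc_vertices_def by auto

lemma inc_edge_sim: "(p, q) \<in> inc_edges C D \<Longrightarrow> sim_P (elem_val p) (elem_val q)"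
  unfolding inc_edges_def by (auto simp: sim_P_def)

lemma inc_edge_nth:
  "(p, q) \<in> inc_edges C D \<Longrightarrow> \<exists>i<length C. \<exists>j<length D. sim_P (C!i) (D!j) \<and>
     (p = Inl (C!i) \<and> q = Inr (D!j) \<or> p = Inr (D!j) \<and> q = Inl (C!i))"
  unfolding inc_edges_def by (auto simp: in_set_conv_nth)

lemma inc_edge_vertices:
  "(p, q) \<in> inc_edges C D \<Longrightarrow> p \<in> inc_vertices C D \<and> q \<in> inc_vertices C D"
  unfolding inc_edges_def by auto

lemma equiv_inc_closure: "equiv UNIV ((inc_edges C D)\<^sup>*)"
proof (rule equivI)
  show "sym ((inc_edges C D)\<^sup>*)"
    by (rule sym_rtrancl) (auto simp: sym_def inc_edges_def)
qed (simp_all add: refl_rtrancl trans_rtrancl)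

lemma ladders_Image: "ladders C D = (\<lambda>v. (inc_edges C D)\<^sup>* `` {v}) ` inc_vertices C D"
  unfolding ladders_def by auto

lemma finite_ladders: "finite (ladders C D)"
  unfolding ladders_Image inc_vertices_def by simp

lemma ladder_of_vertex:
  "v \<in> inc_vertices C D \<Longrightarrow> (inc_edges C D)\<^sup>* `` {v} \<in> ladders C D"
  unfolding ladders_Image by auto

lemma ladder_nonempty: "L \<in> ladders C D \<Longrightarrow> L \<noteq> {}"
  unfolding ladders_Image by auto

lemma ladder_closed: "L \<in> ladders C D \<Longrightarrow> p \<in> L \<Longrightarrow> (p, q) \<in> inc_edges C D \<Longrightarrow> q \<in> L"
  unfolding ladders_Image by auto

lemma ladder_eq_Image:
  assumes "L \<in> ladders C D" "p \<in> L"
  shows "L = (inc_edges C D)\<^sup>* `` {p}"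
proof -
  obtain v where "L = (inc_edges C D)\<^sup>* `` {v}" "(v, p) \<in> (inc_edges C D)\<^sup>*"
    using assms unfolding ladders_Image by auto
  then show ?thesis using equiv_class_eq[OF equiv_inc_closure] by simp
qed

lemma ladder_connected: "L \<in> ladders C D \<Longrightarrow> p \<in> L \<Longrightarrow> q \<in> L \<Longrightarrow> (p, q) \<in> (inc_edges C D)\<^sup>*"
  using ladder_eq_Image[of L C D p] by simp

lemma ladder_eqI:
  "L \<in> ladders C D \<Longrightarrow> L' \<in> ladders C D \<Longrightarrow> p \<in> L \<Longrightarrow> q \<in> L' \<Longrightarrow>
    (p, q) \<in> (inc_edges C D)\<^sup>* \<Longrightarrow> L = L'"
  using ladder_eq_Image[of L C D p] ladder_eq_Image[of L' C D q]
    equiv_class_eq[OF equiv_inc_closure] by simp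

lemma ladder_subset_vertices: "L \<in> ladders C D \<Longrightarrow> L \<subseteq> inc_vertices C D"
proof
  fix p assume "L \<in> ladders C D" "p \<in> L"
  then obtain v where v: "v \<in> inc_vertices C D" "(v, p) \<in> (inc_edges C D)\<^sup>*"
    unfolding ladders_Image by auto
  from v(2) show "p \<in> inc_vertices C D"
    by (cases rule: rtrancl.cases) (use v(1) inc_edge_vertices in auto)
qed

lemma inc_vertices_comparable_if_disconnected:
  assumes C: "sorted_wrt (<) C" and D: "sorted_wrt (<) D"
    and p: "p \<in> inc_vertices C D" and q: "q \<in> inc_vertices C D"
    and disconnected: "(p, q) \<notin> (inc_edges C D)\<^sup>*"
  shows "elem_val p < elem_val q \<or> elem_val q < elem_val p"
proof -
  have "p \<noteq> q" and "(p, q) \<notin> inc_edges C D"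
    using disconnected by auto
  then show ?thesis
    using p q chain_elems_comparable[OF C] chain_elems_comparable[OF D]
    unfolding inc_vertices_def inc_edges_def sim_P_def by (cases p; cases q) auto
qed

lemma ladder_one_side:
  assumes L: "L \<in> ladders C D" and comparable: "\<forall>u\<in>L. elem_val u < w \<or> w < elem_val u"
  shows "(\<forall>u\<in>L. elem_val u < w) \<or> (\<forall>u\<in>L. w < elem_val u)"
proof (rule ccontr)
  define S where "S = {u \<in> L. elem_val u < w}"
  assume "\<not> ?thesis"
  then obtain a b where "a \<in> L" "\<not> w < elem_val a" "b \<in> L" "\<not> elem_val b < w"
    by blast
  then have a: "a \<in> S" and b: "b \<in> L" "b \<notin> S"
    using comparable unfolding S_def by auto
  have "(a, b) \<in> (inc_edges C D)\<^sup>*"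
    using ladder_connected[OF L _ b(1)] a unfolding S_def by simp
  from rtrancl_exit_edge[OF this a b(2)] obtain p q
    where pq: "(p, q) \<in> inc_edges C D" "p \<in> S" "q \<notin> S" by blast
  then have "w < elem_val q"
    using comparable ladder_closed[OF L] unfolding S_def by blast
  moreover have "elem_val p < w" using pq(2) unfolding S_def by simp
  ultimately show False
    using inc_edge_sim[OF pq(1)] unfolding sim_P_def by (meson order.strict_trans)
qed

lemma ladder_lessI:
  assumes L: "L \<in> ladders C D" and L': "L' \<in> ladders C D"
    and comparable: "\<And>u v. u \<in> L \<Longrightarrow> v \<in> L' \<Longrightarrow> elem_val u < elem_val v \<or> elem_val v < elem_val u"
    and u0: "u0 \<in> L" and v0: "v0 \<in> L'" and less: "elem_val u0 < elem_val v0"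
  shows "ladder_less L L'"
  unfolding ladder_less_def
proof (intro ballI)
  fix u v assume u: "u \<in> L" and v: "v \<in> L'"
  have "\<forall>v\<in>L'. elem_val u0 < elem_val v"
    using ladder_one_side[OF L', of "elem_val u0"] comparable[OF u0] v0 less
    by (meson order.asym)
  then have "\<forall>u\<in>L. elem_val u < elem_val v"
    using ladder_one_side[OF L, of "elem_val v"] comparable[OF _ v] u0 v
    by (meson order.asym)
  then show "elem_val u < elem_val v" using u by blast
qed

lemma ladder_less_trans:
  assumes "L2 \<in> ladders C D" "ladder_less L1 L2" "ladder_less L2 L3"
  shows "ladder_less L1 L3"
proof -
  obtain m where "m \<in> L2" using ladder_nonempty[OF assms(1)] by blast
  with assms(2,3) show ?thesis
    unfolding ladder_less_def by (meson order.strict_trans)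
qed

lemma ladder_less_asym:
  assumes "L1 \<in> ladders C D" "L2 \<in> ladders C D" "ladder_less L1 L2"
  shows "\<not> ladder_less L2 L1"
proof -
  obtain u v where "u \<in> L1" "v \<in> L2"
    using ladder_nonempty[OF assms(1)] ladder_nonempty[OF assms(2)] by blast
  with assms(3) show ?thesis
    unfolding ladder_less_def by (meson order.asym)
qed

lemma ladders_ordered:
  assumes C: "sorted_wrt (<) C" and D: "sorted_wrt (<) D"
    and L: "L \<in> ladders C D" and L': "L' \<in> ladders C D" and "L \<noteq> L'"
  shows "ladder_less L L' \<or> ladder_less L' L"
proof -
  have comparable: "elem_val u < elem_val v \<or> elem_val v < elem_val u"
    if "u \<in> L" "v \<in> L'" for u v
  proof (rule inc_vertices_comparable_if_disconnected[OF C D])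
    show "u \<in> inc_vertices C D" "v \<in> inc_vertices C D"
      using that ladder_subset_vertices[OF L] ladder_subset_vertices[OF L'] by blast+
    show "(u, v) \<notin> (inc_edges C D)\<^sup>*"
      using ladder_eqI[OF L L' that] \<open>L \<noteq> L'\<close> by blast
  qed
  obtain u0 v0 where u0: "u0 \<in> L" and v0: "v0 \<in> L'"
    using ladder_nonempty[OF L] ladder_nonempty[OF L'] by blast
  from comparable[OF u0 v0] show ?thesis
  proof
    assume "elem_val u0 < elem_val v0"
    then show ?thesis using ladder_lessI[OF L L' comparable u0 v0] by blast
  next
    assume "elem_val v0 < elem_val u0"
    then show ?thesis
      using ladder_lessI[OF L' L _ v0 u0] comparable by (meson order.asym)
  qed
qed

lemma ladder_decomposition:
  assumes C: "sorted_wrt (<) C" and D: "sorted_wrt (<) D"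
  shows "set (ladder_decomposition C D) = ladders C D"
    and "sorted_wrt ladder_less (ladder_decomposition C D)"
proof -
  have "\<exists>Ls. set Ls = ladders C D \<and> sorted_wrt ladder_less Ls"
  proof (rule finite_set_sorted_wrt_list[OF finite_ladders])
    show "ladder_less L L' \<or> ladder_less L' L"
      if "L \<in> ladders C D" "L' \<in> ladders C D" "L \<noteq> L'" for L L'
      using ladders_ordered[OF C D that] .
    show "ladder_less L1 L3"
      if "L1 \<in> ladders C D" "L2 \<in> ladders C D" "L3 \<in> ladders C D"
        "ladder_less L1 L2" "ladder_less L2 L3" for L1 L2 L3
      using ladder_less_trans that(2,4,5) .
  qed
  then obtain Ls where Ls: "set Ls = ladders C D" "sorted_wrt ladder_less Ls"
    by blast
  have "\<exists>!Ls. set Ls = ladders C D \<and> sorted_wrt ladder_less Ls"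
  proof (rule ex1I[of _ Ls])
    fix Ls' assume "set Ls' = ladders C D \<and> sorted_wrt ladder_less Ls'"
    then show "Ls' = Ls"
      by (intro sorted_wrt_list_unique[of ladder_less Ls' Ls]) (use Ls ladder_less_asym[of _ C D] in auto)
  qed (use Ls in simp)
  then have "set (ladder_decomposition C D) = ladders C D \<and>
      sorted_wrt ladder_less (ladder_decomposition C D)"
    unfolding ladder_decomposition_def by (rule theI')
  then show "set (ladder_decomposition C D) = ladders C D"
    and "sorted_wrt ladder_less (ladder_decomposition C D)" by simp_all
qed

context
  fixes C D :: "'a::order list"
  assumes C: "sorted_wrt (<) C" and D: "sorted_wrt (<) D"
begin

lemma ladder_decomposition_nth_mem:
  "j < length (ladder_decomposition C D) \<Longrightarrow> ladder_decomposition C D ! j \<in> ladders C D"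
  using ladder_decomposition(1)[OF C D] nth_mem by blast

lemma ladder_decomposition_nth_less:
  "i < j \<Longrightarrow> j < length (ladder_decomposition C D) \<Longrightarrow>
    ladder_less (ladder_decomposition C D ! i) (ladder_decomposition C D ! j)"
  using ladder_decomposition(2)[OF C D] sorted_wrt_nth_less by blast

lemma ladder_decomposition_covers:
  assumes "v \<in> inc_vertices C D"
  shows "\<exists>j<length (ladder_decomposition C D). v \<in> ladder_decomposition C D ! j"
proof -
  have "(inc_edges C D)\<^sup>* `` {v} \<in> set (ladder_decomposition C D)"
    using ladder_of_vertex[OF assms] ladder_decomposition(1)[OF C D] by simp
  then show ?thesis by (force simp: in_set_conv_nth)
qed

lemma ladder_decomposition_index_unique:
  "i < length (ladder_decomposition C D) \<Longrightarrow> j < length (ladder_decomposition C D) \<Longrightarrow>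
    v \<in> ladder_decomposition C D ! i \<Longrightarrow> v \<in> ladder_decomposition C D ! j \<Longrightarrow> i = j"
  using ladder_decomposition_nth_less unfolding ladder_less_def
  by (metis linorder_neqE_nat order.irrefl)

end

definition ladder_prefix :: "('a + 'a) set list \<Rightarrow> ('a \<Rightarrow> 'a + 'a) \<Rightarrow> nat \<Rightarrow> 'a set" where
  "ladder_prefix Ls side k = {x. \<exists>j<k. side x \<in> Ls!j}"

text \<open>Below, X is C with side = Inl, or D with side = Inr; then
  ladder_prefix Ls side k is the set of elements of X lying in the k lowest ladders.\<close>

locale ladder_side =
  fixes C D X :: "'a::order list" and side :: "'a \<Rightarrow> 'a + 'a"
  assumes chain_C: "sorted_wrt (<) C" and chain_D: "sorted_wrt (<) D"
    and chain_X: "sorted_wrt (<) X"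
    and elem_val_side [simp]: "elem_val (side x) = x"
    and side_in_inc_vertices [simp]: "side x \<in> inc_vertices C D \<longleftrightarrow> x \<in> set X"
begin

abbreviation Ls where "Ls \<equiv> ladder_decomposition C D"

lemma side_mem_ladder_imp_mem:
  assumes "j < length Ls" "side x \<in> Ls!j"
  shows "x \<in> set X"
  using ladder_subset_vertices[OF ladder_decomposition_nth_mem[OF chain_C chain_D assms(1)]] assms(2)
  by (metis side_in_inc_vertices subsetD)

lemma sum_card_ladder_parts:
  assumes "k \<le> length Ls"
  shows "(\<Sum>j<k. card {x. side x \<in> Ls!j}) = card (ladder_prefix Ls side k)"
proof -
  have finite: "finite {x. side x \<in> Ls!j}" if "j < k" for j
  proof (rule finite_subset)
    show "{x. side x \<in> Ls!j} \<subseteq> set X"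
      using side_mem_ladder_imp_mem[OF order_less_le_trans[OF that assms]] by blast
  qed simp
  have "ladder_prefix Ls side k = (\<Union>j\<in>{..<k}. {x. side x \<in> Ls!j})"
    unfolding ladder_prefix_def by blast
  also have "card \<dots> = (\<Sum>j<k. card {x. side x \<in> Ls!j})"
  proof (rule card_UN_disjoint)
    show "\<forall>i\<in>{..<k}. \<forall>j\<in>{..<k}. i \<noteq> j \<longrightarrow> {x. side x \<in> Ls!i} \<inter> {x. side x \<in> Ls!j} = {}"
    proof (intro ballI impI)
      fix i j assume "i \<in> {..<k}" "j \<in> {..<k}" "i \<noteq> j"
      then show "{x. side x \<in> Ls!i} \<inter> {x. side x \<in> Ls!j} = {}"
        using ladder_decomposition_index_unique[OF chain_C chain_D, of i j] assms by auto
    qed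
  qed (use finite in auto)
  finally show ?thesis by simp
qed

lemma ladder_prefix_mem_iff:
  assumes j: "j < length Ls" and x: "side x \<in> Ls!j" and k: "k \<le> length Ls"
  shows "x \<in> ladder_prefix Ls side k \<longleftrightarrow> j < k"
proof
  assume "x \<in> ladder_prefix Ls side k"
  then obtain j' where "j' < k" "side x \<in> Ls!j'" unfolding ladder_prefix_def by blast
  moreover have "j' < length Ls" using \<open>j' < k\<close> k by simp
  ultimately show "j < k"
    using ladder_decomposition_index_unique[OF chain_C chain_D j _ x] by blast
qed (use x in \<open>auto simp: ladder_prefix_def\<close>)

lemma ladder_index_exists:
  assumes "x \<in> set X"
  obtains j where "j < length Ls" "side x \<in> Ls!j"
  using ladder_decomposition_covers[OF chain_C chain_D, of "side x"] assms by auto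

lemma ladder_prefix_chain_downset:
  assumes k: "k \<le> length Ls"
  shows "chain_downset (ladder_prefix Ls side k) X"
  unfolding chain_downset_def
proof (intro conjI ballI impI subsetI)
  fix x assume "x \<in> ladder_prefix Ls side k"
  then obtain j where "j < k" "side x \<in> Ls!j" unfolding ladder_prefix_def by blast
  then show "x \<in> set X"
    using side_mem_ladder_imp_mem k by (meson order_less_le_trans)
next
  fix x y assume x: "x \<in> ladder_prefix Ls side k" and y: "y \<in> set X" "y < x"
  obtain j where j: "j < k" "side x \<in> Ls!j" using x unfolding ladder_prefix_def by blast
  obtain j' where j': "j' < length Ls" "side y \<in> Ls!j'" using ladder_index_exists[OF y(1)] .
  have "\<not> j < j'"
  proof
    assume "j < j'"
    then have "elem_val (side x) < elem_val (side y)"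
      using ladder_decomposition_nth_less[OF chain_C chain_D _ j'(1)] j(2) j'(2)
      unfolding ladder_less_def by blast
    then show False using y(2) by simp
  qed
  then have "j' < k" using j(1) by simp
  then show "y \<in> ladder_prefix Ls side k"
    using j'(2) unfolding ladder_prefix_def by blast
qed

lemma card_ladder_prefix_le:
  assumes "k \<le> length Ls"
  shows "card (ladder_prefix Ls side k) \<le> length X"
proof -
  have "card (ladder_prefix Ls side k) \<le> card (set X)"
    using ladder_prefix_chain_downset[OF assms] unfolding chain_downset_def
    by (simp add: card_mono)
  then show ?thesis using card_length le_trans by blast
qed

lemma nth_mem_ladder_prefix_iff:
  "k \<le> length Ls \<Longrightarrow> r < length X \<Longrightarrow>
    X!r \<in> ladder_prefix Ls side k \<longleftrightarrow> r < card (ladder_prefix Ls side k)"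
  using chain_downset_nth_mem_iff[OF chain_X ladder_prefix_chain_downset] .

lemma ladder_first_index:
  assumes j: "j < length Ls" and i: "i < length X" and "side (X!i) \<in> Ls!j"
  shows "card (ladder_prefix Ls side j) \<le> i"
  using nth_mem_ladder_prefix_iff[of j i] ladder_prefix_mem_iff[of j "X!i" j] assms by simp

lemma ladder_contains_interval:
  assumes j: "j < length Ls" and r: "r < length X" and "side (X!r) \<in> Ls!j"
    and t: "card (ladder_prefix Ls side j) \<le> t" "t \<le> r"
  shows "side (X!t) \<in> Ls!j"
proof -
  have "t < length X" using t r by simp
  then obtain j' where j': "j' < length Ls" "side (X!t) \<in> Ls!j'"
    using ladder_index_exists nth_mem by blast
  have "\<not> j' < j"
    using nth_mem_ladder_prefix_iff[of j t] ladder_prefix_mem_iff[OF j' _, of j] j j' t r by simp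
  moreover have "\<not> j < j'"
    using ladder_decomposition_nth_less[OF chain_C chain_D, of j j'] j' assms
      chain_nth_le[OF chain_X t(2) r] unfolding ladder_less_def by fastforce
  ultimately show ?thesis using j' by (metis linorder_neqE_nat)
qed

end

lemma three_one_free_no_jump:
  fixes a b c x y z :: "'a::order"
  assumes "three_one_free TYPE('a)"
    and za: "sim_P z a" and "a < b" "b < c" "c \<le> y" and "x \<le> z" and xy: "sim_P x y"
  shows False
proof -
  have zw: "sim_P z w" if "a < w" "w \<le> y" for w
  proof -
    have "\<not> w < z" using za \<open>a < w\<close> unfolding sim_P_def by (meson order.strict_trans)
    moreover have "\<not> z < w"
      using \<open>x \<le> z\<close> \<open>w \<le> y\<close> xy unfolding sim_P_def
      by (meson order.strict_trans1 order.strict_trans2)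
    ultimately show ?thesis unfolding sim_P_def by simp
  qed
  have "sim_P z b" using zw \<open>a < b\<close> \<open>b < c\<close> \<open>c \<le> y\<close> by simp
  moreover have "sim_P z c" using zw \<open>a < b\<close> \<open>b < c\<close> \<open>c \<le> y\<close> by simp
  ultimately show False
    using assms(1) za \<open>a < b\<close> \<open>b < c\<close> unfolding three_one_free_def by blast
qed

text \<open>L is a connected set, closed under the edges E, of a bipartite incomparability graph
  between the chains X and Y, whose vertices are tagged by inx and iny; s and u are lower
  bounds for the indices of the elements of X and Y in L.\<close>

locale ladder_of_chains =
  fixes X Y :: "'a::order list" and inx iny :: "'a \<Rightarrow> 'v"
    and E :: "('v \<times> 'v) set" and L :: "'v set" and s u :: nat
  assumes three_one_free: "three_one_free TYPE('a)"
    and chain_X: "sorted_wrt (<) X" and chain_Y: "sorted_wrt (<) Y"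
    and inj_inx: "inj inx" and inj_iny: "inj iny" and inx_neq_iny: "inx a \<noteq> iny b"
    and edge_cases: "(p, q) \<in> E \<Longrightarrow> \<exists>i<length X. \<exists>j<length Y. sim_P (X!i) (Y!j) \<and>
      (p = inx (X!i) \<and> q = iny (Y!j) \<or> p = iny (Y!j) \<and> q = inx (X!i))"
    and closed: "p \<in> L \<Longrightarrow> (p, q) \<in> E \<Longrightarrow> q \<in> L"
    and connected: "p \<in> L \<Longrightarrow> q \<in> L \<Longrightarrow> (p, q) \<in> E\<^sup>*"
    and lower_X: "i < length X \<Longrightarrow> inx (X!i) \<in> L \<Longrightarrow> s \<le> i"
    and lower_Y: "i < length Y \<Longrightarrow> iny (Y!i) \<in> L \<Longrightarrow> u \<le> i"
begin

lemma swap: "ladder_of_chains Y X iny inx E L u s"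
proof
  fix p q assume "(p, q) \<in> E"
  then show "\<exists>i<length Y. \<exists>j<length X. sim_P (Y!i) (X!j) \<and>
      (p = iny (Y!i) \<and> q = inx (X!j) \<or> p = inx (X!j) \<and> q = iny (Y!i))"
    using edge_cases sim_P_sym by meson
qed (use three_one_free chain_X chain_Y inj_inx inj_iny inx_neq_iny closed connected
       lower_X lower_Y in \<open>metis+\<close>)

definition lower_block :: "nat \<Rightarrow> 'v set" where
  "lower_block n = inx ` (!) X ` {s..<s+n} \<union> iny ` (!) Y ` {u..u+n}"

lemma inx_mem_lower_block_iff:
  assumes i: "i < length X" and len: "s + n < length X"
  shows "inx (X!i) \<in> lower_block n \<longleftrightarrow> s \<le> i \<and> i < s + n"
proof -
  have "inx (X!i) \<in> lower_block n \<longleftrightarrow> X!i \<in> (!) X ` {s..<s+n}"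
    unfolding lower_block_def by (simp add: image_iff inx_neq_iny inj_eq[OF inj_inx])
  also have "\<dots> \<longleftrightarrow> s \<le> i \<and> i < s + n"
  proof
    assume "X!i \<in> (!) X ` {s..<s+n}"
    then obtain i' where "i' \<in> {s..<s+n}" "X!i = X!i'" by blast
    then show "s \<le> i \<and> i < s + n"
      using chain_nth_inj[OF chain_X i, of i'] len by auto
  qed auto
  finally show ?thesis .
qed

lemma iny_mem_lower_block_iff:
  assumes j: "j < length Y" and len: "u + n < length Y"
  shows "iny (Y!j) \<in> lower_block n \<longleftrightarrow> u \<le> j \<and> j \<le> u + n"
proof -
  have "iny (Y!j) \<in> lower_block n \<longleftrightarrow> Y!j \<in> (!) Y ` {u..u+n}"
    unfolding lower_block_def
    by (simp add: image_iff inx_neq_iny[symmetric] inj_eq[OF inj_iny])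
  also have "\<dots> \<longleftrightarrow> u \<le> j \<and> j \<le> u + n"
  proof
    assume "Y!j \<in> (!) Y ` {u..u+n}"
    then obtain j' where "j' \<in> {u..u+n}" "Y!j = Y!j'" by blast
    then show "u \<le> j \<and> j \<le> u + n"
      using chain_nth_inj[OF chain_Y j, of j'] len by auto
  qed auto
  finally show ?thesis .
qed

lemma lower_block_subset:
  assumes in_L: "\<forall>i\<le>n. inx (X!(s+i)) \<in> L" "\<forall>i\<le>n. iny (Y!(u+i)) \<in> L"
  shows "lower_block n \<subseteq> L"
proof
  fix p assume "p \<in> lower_block n"
  then consider (X) i where "i \<in> {s..<s+n}" "p = inx (X!i)"
    | (Y) j where "j \<in> {u..u+n}" "p = iny (Y!j)"
    unfolding lower_block_def by blast
  then show "p \<in> L"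
  proof cases
    case X
    then show ?thesis using in_L(1)[rule_format, of "i - s"] by auto
  next
    case Y
    then show ?thesis using in_L(2)[rule_format, of "j - u"] by auto
  qed
qed

text \<open>An edge of L leaving the lower block either joins some X!i, i < s + n, to a Y!j above
  Y!(u+n), which together with X!(s+n-1) and Y!(u+n-1) forms a (3+1); or it joins some
  Y!j, j \<le> u + n, to an X!i with i \<ge> s + n, and then Y!j < X!i.\<close>

lemma not_less_at_level:
  assumes in_L: "\<forall>i\<le>n. inx (X!(s+i)) \<in> L" "\<forall>i\<le>n. iny (Y!(u+i)) \<in> L"
    and len: "s + n < length X" "u + n < length Y"
    and prev: "0 < n \<Longrightarrow> sim_P (X!(s+n-1)) (Y!(u+n-1))"
  shows "\<not> Y!(u+n) < X!(s+n)"
proof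
  assume less: "Y!(u+n) < X!(s+n)"
  note inx_iff = inx_mem_lower_block_iff[OF _ len(1)]
  note iny_iff = iny_mem_lower_block_iff[OF _ len(2)]
  have path: "(iny (Y!(u+n)), inx (X!(s+n))) \<in> E\<^sup>*"
    using connected in_L(1)[rule_format, of n] in_L(2)[rule_format, of n] by simp
  have start: "iny (Y!(u+n)) \<in> lower_block n"
    using iny_iff[OF len(2)] by simp
  have stop: "inx (X!(s+n)) \<notin> lower_block n"
    using inx_iff[OF len(1)] by simp
  obtain p q where pq: "(p, q) \<in> E" "p \<in> lower_block n" "q \<notin> lower_block n"
    using rtrancl_exit_edge[OF path start stop] by blast
  have "q \<in> L" using closed[OF _ pq(1)] pq(2) lower_block_subset[OF in_L] by blast
  obtain i j where ij: "i < length X" "j < length Y" "sim_P (X!i) (Y!j)"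
    and edge: "p = inx (X!i) \<and> q = iny (Y!j) \<or> p = iny (Y!j) \<and> q = inx (X!i)"
    using edge_cases[OF pq(1)] by blast
  from edge show False
  proof
    assume "p = inx (X!i) \<and> q = iny (Y!j)"
    then have i: "s \<le> i" "i < s + n" and j: "u + n < j"
      using inx_iff[OF ij(1)] iny_iff[OF ij(2)] lower_Y[OF ij(2)] pq(2,3) \<open>q \<in> L\<close> by auto
    show False
    proof (rule three_one_free_no_jump[OF three_one_free])
      show "sim_P (X!(s+n-1)) (Y!(u+n-1))" using prev i by simp
      show "Y!(u+n-1) < Y!(u+n)" "Y!(u+n) < Y!(u+n+1)"
        using sorted_wrt_nth_less[OF chain_Y] i j ij(2) by simp_all
      show "Y!(u+n+1) \<le> Y!j" "X!i \<le> X!(s+n-1)"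
        using chain_nth_le[OF chain_Y] chain_nth_le[OF chain_X] i j ij len by simp_all
    qed (use ij in simp)
  next
    assume "p = iny (Y!j) \<and> q = inx (X!i)"
    then have "j \<le> u + n" "s + n \<le> i"
      using inx_iff[OF ij(1)] iny_iff[OF ij(2)] lower_X[OF ij(1)] pq(2,3) \<open>q \<in> L\<close> by auto
    then have "Y!j < X!i"
      using chain_nth_le[OF chain_Y _ len(2)] chain_nth_le[OF chain_X _ ij(1)] less
      by (meson order.strict_trans1 order.strict_trans2)
    then show False using ij(3) unfolding sim_P_def by simp
  qed
qed

lemma sim_at_level:
  assumes "\<forall>i\<le>n. inx (X!(s+i)) \<in> L" "\<forall>i\<le>n. iny (Y!(u+i)) \<in> L"
    and "s + n < length X" "u + n < length Y"
  shows "sim_P (X!(s+n)) (Y!(u+n))"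
  using assms
proof (induction n)
  case 0
  then show ?case
    using not_less_at_level[of 0] ladder_of_chains.not_less_at_level[OF swap, of 0]
    unfolding sim_P_def by simp
next
  case (Suc n)
  then have "sim_P (X!(s+n)) (Y!(u+n))" by simp
  then show ?case
    using not_less_at_level[of "Suc n"] ladder_of_chains.not_less_at_level[OF swap, of "Suc n"]
      Suc.prems sim_P_sym unfolding sim_P_def by simp
qed

end

context
  fixes C D :: "'a::order list"
  assumes C: "sorted_wrt (<) C" and D: "sorted_wrt (<) D"
begin

interpretation left: ladder_side C D C Inl
  by unfold_locales (simp_all add: C D)

interpretation right: ladder_side C D D Inr
  by unfold_locales (simp_all add: C D)

lemma ladder_condition_iff_prefix_card:
  "ladder_condition C D \<longleftrightarrow> (\<forall>k\<le>length (ladder_decomposition C D).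
     card (ladder_prefix (ladder_decomposition C D) Inr k) \<le>
     card (ladder_prefix (ladder_decomposition C D) Inl k))"
proof -
  let ?Ls = "ladder_decomposition C D"
  have "ladder_condition C D \<longleftrightarrow> (\<forall>k\<in>{1..length ?Ls}.
      card (ladder_prefix ?Ls Inr k) \<le> card (ladder_prefix ?Ls Inl k))"
    unfolding ladder_condition_def Let_def part_in_C_def part_in_D_def
    using left.sum_card_ladder_parts right.sum_card_ladder_parts by simp
  also have "\<dots> \<longleftrightarrow> (\<forall>k\<le>length ?Ls.
      card (ladder_prefix ?Ls Inr k) \<le> card (ladder_prefix ?Ls Inl k))"
  proof (intro iffI allI impI)
    fix k assume "\<forall>k\<in>{1..length ?Ls}.
      card (ladder_prefix ?Ls Inr k) \<le> card (ladder_prefix ?Ls Inl k)" and "k \<le> length ?Ls"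
    then show "card (ladder_prefix ?Ls Inr k) \<le> card (ladder_prefix ?Ls Inl k)"
      by (cases k) (auto simp: ladder_prefix_def)
  qed auto
  finally show ?thesis .
qed

lemma ladder_condition_if_rows_ascending:
  assumes len: "length D \<le> length C" and rows: "\<forall>r<length D. \<not> D!r < C!r"
  shows "ladder_condition C D"
  unfolding ladder_condition_iff_prefix_card
proof (intro allI impI)
  let ?Ls = "ladder_decomposition C D"
  fix k assume k: "k \<le> length ?Ls"
  show "card (ladder_prefix ?Ls Inr k) \<le> card (ladder_prefix ?Ls Inl k)"
  proof (rule ccontr)
    define m where "m = card (ladder_prefix ?Ls Inl k)"
    assume "\<not> ?thesis"
    then have m_less: "m < card (ladder_prefix ?Ls Inr k)" unfolding m_def by simp
    then have mD: "m < length D" and mC: "m < length C"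
      using right.card_ladder_prefix_le[OF k] len by simp_all
    obtain j where j: "j < length ?Ls" "Inr (D!m) \<in> ?Ls!j"
      using right.ladder_index_exists mD nth_mem by blast
    obtain j' where j': "j' < length ?Ls" "Inl (C!m) \<in> ?Ls!j'"
      using left.ladder_index_exists mC nth_mem by blast
    have "j < k"
      using right.nth_mem_ladder_prefix_iff[OF k mD] right.ladder_prefix_mem_iff[OF j k] m_less
      by simp
    moreover have "\<not> j' < k"
      using left.nth_mem_ladder_prefix_iff[OF k mC] left.ladder_prefix_mem_iff[OF j' k]
      unfolding m_def by simp
    ultimately have "ladder_less (?Ls!j) (?Ls!j')"
      using ladder_decomposition_nth_less[OF C D _ j'(1)] by simp
    then have "D!m < C!m" using j(2) j'(2) unfolding ladder_less_def by fastforce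
    then show False using rows mD by blast
  qed
qed

lemma same_ladder_not_descending:
  assumes tof: "three_one_free TYPE('a)"
    and j: "j < length (ladder_decomposition C D)"
    and Dr: "Inr (D!r) \<in> ladder_decomposition C D ! j" and rD: "r < length D"
    and Cr: "Inl (C!r) \<in> ladder_decomposition C D ! j" and rC: "r < length C"
    and prefix: "card (ladder_prefix (ladder_decomposition C D) Inr j)
      \<le> card (ladder_prefix (ladder_decomposition C D) Inl j)"
  shows "\<not> D!r < C!r"
proof -
  let ?Ls = "ladder_decomposition C D"
  define s where "s = card (ladder_prefix ?Ls Inl j)"
  define u where "u = card (ladder_prefix ?Ls Inr j)"
  have "u \<le> s" using prefix unfolding s_def u_def .
  have "s \<le> r" using left.ladder_first_index[OF j rC Cr] unfolding s_def .
  define n where "n = r - s"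
  \<comment> \<open>The elements of C and D in the ladder start at C!s and D!u.\<close>
  interpret ladder_of_chains C D Inl Inr "inc_edges C D" "?Ls!j" s u
  proof
    show "i < length C \<Longrightarrow> Inl (C!i) \<in> ?Ls!j \<Longrightarrow> s \<le> i" for i
      using left.ladder_first_index[OF j] unfolding s_def .
    show "i < length D \<Longrightarrow> Inr (D!i) \<in> ?Ls!j \<Longrightarrow> u \<le> i" for i
      using right.ladder_first_index[OF j] unfolding u_def .
  qed (use tof C D inc_edge_nth ladder_closed ladder_connected
         ladder_decomposition_nth_mem[OF C D j] in auto)
  have "sim_P (C!(s+n)) (D!(u+n))"
  proof (rule sim_at_level)
    show "\<forall>i\<le>n. Inl (C!(s+i)) \<in> ?Ls!j"
      using left.ladder_contains_interval[OF j rC Cr] \<open>s \<le> r\<close> unfolding s_def n_def by simp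
    show "\<forall>i\<le>n. Inr (D!(u+i)) \<in> ?Ls!j"
      using right.ladder_contains_interval[OF j rD Dr] \<open>u \<le> s\<close> \<open>s \<le> r\<close>
      unfolding u_def n_def s_def by simp
  qed (use rC rD \<open>u \<le> s\<close> \<open>s \<le> r\<close> n_def in simp_all)
  moreover have "D!(u+n) \<le> D!r"
    using chain_nth_le[OF D _ rD] \<open>u \<le> s\<close> \<open>s \<le> r\<close> unfolding n_def by simp
  moreover have "C!(s+n) = C!r" using \<open>s \<le> r\<close> unfolding n_def by simp
  ultimately show ?thesis unfolding sim_P_def by (metis order.strict_trans1)
qed

lemma rows_ascending_if_ladder_condition:
  assumes tof: "three_one_free TYPE('a)" and len: "length D \<le> length C"
    and cond: "ladder_condition C D" and rD: "r < length D"
  shows "\<not> D!r < C!r"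
proof
  let ?Ls = "ladder_decomposition C D"
  assume less: "D!r < C!r"
  have rC: "r < length C" using rD len by simp
  have prefix: "card (ladder_prefix ?Ls Inr k) \<le> card (ladder_prefix ?Ls Inl k)"
    if "k \<le> length ?Ls" for k
    using cond that unfolding ladder_condition_iff_prefix_card by blast
  obtain j where j: "j < length ?Ls" "Inr (D!r) \<in> ?Ls!j"
    using right.ladder_index_exists rD nth_mem by blast
  obtain j' where j': "j' < length ?Ls" "Inl (C!r) \<in> ?Ls!j'"
    using left.ladder_index_exists rC nth_mem by blast
  consider "j' < j" | "j < j'" | "j' = j" by linarith
  then show False
  proof cases
    case 1
    then have "C!r < D!r"
      using ladder_decomposition_nth_less[OF C D _ j(1)] j(2) j'(2)
      unfolding ladder_less_def by fastforce
    then show False using less by simp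
  next
    case 2
    then have k: "Suc j \<le> length ?Ls" using j'(1) by simp
    have "r < card (ladder_prefix ?Ls Inr (Suc j))"
      using right.nth_mem_ladder_prefix_iff[OF k rD] right.ladder_prefix_mem_iff[OF j k] by simp
    moreover have "card (ladder_prefix ?Ls Inl (Suc j)) \<le> r"
      using left.nth_mem_ladder_prefix_iff[OF k rC] left.ladder_prefix_mem_iff[OF j' k] 2 by simp
    ultimately show False using prefix[OF k] by simp
  next
    case 3
    then show False
      using same_ladder_not_descending[OF tof j(1) j(2) rD _ rC prefix] j'(2) j(1) less by simp
  qed
qed

end

theorem mainTheorem18:
  fixes T :: "'a::{order,finite} list list"
  assumes "three_one_free TYPE('a)"
    and "P_array T"
  shows "P_tableau T \<longleftrightarrow>
           (\<forall>i. Suc i < length T \<longrightarrow> ladder_condition (T ! i) (T ! Suc i))"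
proof -
  have chain: "sorted_wrt (<) (T!i)" if "i < length T" for i
    using assms(2) that unfolding P_array_def by auto
  have shorter: "length (T!Suc i) \<le> length (T!i)" if "Suc i < length T" for i
    using assms(2) sorted_wrt_nth_less[of "(\<ge>)" "map length T" i "Suc i"] that
    unfolding P_array_def young_filling_def by simp
  have "(\<forall>r<length (T!Suc i). \<not> T!Suc i!r < T!i!r) \<longleftrightarrow> ladder_condition (T!i) (T!Suc i)"
    if "Suc i < length T" for i
    using ladder_condition_if_rows_ascending[OF chain chain shorter]
      rows_ascending_if_ladder_condition[OF chain chain assms(1) shorter] that
    by (meson Suc_lessD)
  then show ?thesis
    unfolding P_tableau_def using assms(2) by blast
qed

end
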